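(* Consider $m$ shoes and a partition of the generic shoe sole into $J$ subsets $A_1,\dots,A_J$. For shoe $i$ and subset $j$, let $S_{ij}\ge 0$ be the area of the contact surface of shoe $i$ in $A_j$, and let $n_{ij}\in\{0,1,2,\dots\}$ be the observed number of randomly acquired characteristics (RACs) of shoe $i$ in $A_j$. Write $n_i=\sum_{j} n_{ij}$ and $n_{\cdot j}=\sum_{i=1}^m n_{ij}$. The model is: $a_1,\dots,a_m$ are i.i.d. positive random variables with $E(a_i)=1$ and density $h_\theta$ from a family indexed by $\theta$, and conditionally on $a_i$ the counts $N_{i1},\dots,N_{iJ}$ are independent with $N_{ij}\mid a_i\sim \mathrm{Poisson}(\lambda_j S_{ij} a_i)$, where $\lambda_1,\dots,\lambda_J>0$ are unknown. Consider the following three estimators of $(\lambda_1,\dots,\lambda_J)$: (i) the naive estimator $\hat\lambda_j=\frac{1}{|m_j|}\sum_{i\in m_j}\frac{n_{ij}}{S_{ij}}$, where $m_j=\{i: S_{ij}>0\}$; (ii) the random effects estimator: $(\hat\lambda_1,\dots,\hat\lambda_J)$ together with $\hat\theta$ maximize $$L(\lambda_1,\dots,\lambda_J,\theta)=\prod_{i=1}^m\int\prod_{j=1}^J\frac{e^{-\lambda_j a S_{ij}}(\lambda_j a S_{ij})^{n_{ij}}}{n_{ij}!}\,h_\theta(a)\,da;$$ (iii) the conditional maximum likelihood (CML) estimator: $(\hat\lambda_1,\dots,\hat\lambda_J)$ with positive entries solving, for every $k=1,\dots,J$, $$\sum_{i=1}^m\left[\frac{n_{ik}}{\hat\lambda_k}-\frac{n_i}{\sum_{j'}S_{ij'}\hat\lambda_{j'}}S_{ik}\right]=0$$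 (these are the score equations of the conditional log-likelihood $\sum_i\sum_j n_{ij}[\log\lambda_j+\log S_{ij}-\log(\sum_{j'}S_{ij'}\lambda_{j'})]$, obtained by conditioning on $N_i=n_i$; this determines $\lambda$ only up to a positive multiplicative constant). If $S_{ij}=S_j$ for all $i,j$ (all shoes have the same contact surface areas in each subset), with $S_j>0$ for all $j$, then for each of the three estimators, $$\frac{\hat\lambda_j}{\hat\lambda_k}=\frac{n_{\cdot j}}{n_{\cdot k}}\cdot\frac{S_k}{S_j}$$ for any $j,k$ with $n_{\cdot k}>0$.
   Context: RACs are randomly acquired characteristics (e.g. scratches, holes) on shoe soles; $a_i$ models the degree of wear and tear of shoe $i$. The CML estimator is defined only up to a common positive scale, but the ratios $\hat\lambda_j/\hat\lambda_k$ are well defined. *)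

theory Defs
  imports "HOL-Analysis.Analysis"
begin

text \<open>Shoes are indexed by i < m, subsets of the sole by j < J.
  S i j = contact surface area of shoe i in A_j, n i j = observed RAC count.\<close>

definition row_total :: "nat \<Rightarrow> (nat \<Rightarrow> nat \<Rightarrow> nat) \<Rightarrow> nat \<Rightarrow> nat" where
  "row_total J n i = (\<Sum>j<J. n i j)"

definition col_total :: "nat \<Rightarrow> (nat \<Rightarrow> nat \<Rightarrow> nat) \<Rightarrow> nat \<Rightarrow> nat" where
  "col_total m n j = (\<Sum>i<m. n i j)"

definition naive_est :: "nat \<Rightarrow> (nat \<Rightarrow> nat \<Rightarrow> real) \<Rightarrow> (nat \<Rightarrow> nat \<Rightarrow> nat) \<Rightarrow> nat \<Rightarrow> real" where
  "naive_est m S n j =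
     (let mj = {i. i < m \<and> S i j > 0}
      in (1 / real (card mj)) * (\<Sum>i\<in>mj. real (n i j) / S i j))"

definition mean_one_pos_density :: "(real \<Rightarrow> real) \<Rightarrow> bool" where
  "mean_one_pos_density f \<longleftrightarrow>
     f \<in> borel_measurable borel \<and> (\<forall>a. 0 \<le> f a) \<and> (\<forall>a\<le>0. f a = 0) \<and>
     integrable lborel f \<and> integral\<^sup>L lborel f = 1 \<and>
     integrable lborel (\<lambda>a. a * f a) \<and> integral\<^sup>L lborel (\<lambda>a. a * f a) = 1"

definition RE_lik :: "nat \<Rightarrow> nat \<Rightarrow> (nat \<Rightarrow> nat \<Rightarrow> real) \<Rightarrow> (nat \<Rightarrow> nat \<Rightarrow> nat)
    \<Rightarrow> ('t \<Rightarrow> real \<Rightarrow> real) \<Rightarrow> (nat \<Rightarrow> real) \<Rightarrow> 't \<Rightarrow> real" where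
  "RE_lik m J S n h lam \<theta> =
     (\<Prod>i<m. \<integral>a. (\<Prod>j<J. exp (- (lam j * a * S i j)) * (lam j * a * S i j) ^ (n i j)
                          / fact (n i j)) * h \<theta> a \<partial>lborel)"

definition is_RE_est :: "nat \<Rightarrow> nat \<Rightarrow> (nat \<Rightarrow> nat \<Rightarrow> real) \<Rightarrow> (nat \<Rightarrow> nat \<Rightarrow> nat)
    \<Rightarrow> ('t \<Rightarrow> real \<Rightarrow> real) \<Rightarrow> 't set \<Rightarrow> (nat \<Rightarrow> real) \<Rightarrow> 't \<Rightarrow> bool" where
  "is_RE_est m J S n h \<Theta> lam \<theta> \<longleftrightarrow>
     (\<forall>j<J. lam j > 0) \<and> \<theta> \<in> \<Theta> \<and>
     (\<forall>lam' \<theta>'. (\<forall>j<J. lam' j > 0) \<and> \<theta>' \<in> \<Theta> \<longrightarrow>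
        RE_lik m J S n h lam' \<theta>' \<le> RE_lik m J S n h lam \<theta>)"

definition is_CML_est :: "nat \<Rightarrow> nat \<Rightarrow> (nat \<Rightarrow> nat \<Rightarrow> real) \<Rightarrow> (nat \<Rightarrow> nat \<Rightarrow> nat)
    \<Rightarrow> (nat \<Rightarrow> real) \<Rightarrow> bool" where
  "is_CML_est m J S n lam \<longleftrightarrow>
     (\<forall>j<J. lam j > 0) \<and>
     (\<forall>k<J. (\<Sum>i<m. real (n i k) / lam k
               - real (row_total J n i) / (\<Sum>j'<J. S i j' * lam j') * S i k) = 0)"

end

theory Submission
  imports Defs
begin

(* With common surfaces S_j the naive estimator is n_.j / (m S_j), and in the CML score
   equations every shoe has the same denominator D, so the j-th equation says that
   n_.j / lambda_j is (sum_i n_i / D) S_j.  For the random effects estimator the likelihood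
   factors as prod_l (lambda_l S_l)^(n_.l) times a positive function of sum_l lambda_l S_l.
   Hence at a maximizer x_l = lambda_l S_l maximizes the multinomial likelihood prod_l x_l^(n_.l)
   among positive vectors with the same total, and moving mass between two coordinates shows
   that such a maximizer is proportional to the column totals n_.l. *)

lemma power_div_fact_le_exp:
  fixes y :: real
  assumes "0 \<le> y"
  shows "y ^ q / fact q \<le> exp y"
proof -
  have "y ^ q /\<^sub>R fact q \<le> (\<Sum>i. y ^ i /\<^sub>R fact i)"
    using sum_le_suminf[OF summable_exp_generic[of y], of "{q}"] assms by simp
  then show ?thesis by (simp add: exp_def divide_inverse mult.commute)
qed

lemma exp_neg_mult_power_le:
  fixes s a :: real
  assumes "0 < s" "0 \<le> a"
  shows "exp (- (s * a)) * a ^ r \<le> fact r / s ^ r"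
proof -
  have "(s * a) ^ r / fact r \<le> exp (s * a)"
    using assms by (intro power_div_fact_le_exp) simp
  then show ?thesis
    using assms by (simp add: exp_minus power_mult_distrib field_simps)
qed

lemma prod_poisson_weights_factor:
  fixes x :: "'a \<Rightarrow> real" and q :: "'a \<Rightarrow> nat"
  assumes "finite I"
  shows "(\<Prod>l\<in>I. exp (- (x l * a)) * (x l * a) ^ q l / fact (q l))
       = (\<Prod>l\<in>I. x l ^ q l / fact (q l)) * (exp (- ((\<Sum>l\<in>I. x l) * a)) * a ^ (\<Sum>l\<in>I. q l))"
proof -
  have "(\<Prod>l\<in>I. exp (- (x l * a)) * (x l * a) ^ q l / fact (q l))
      = (\<Prod>l\<in>I. x l ^ q l / fact (q l) * (exp (- (x l * a)) * a ^ q l))"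
    by (intro prod.cong refl) (simp add: power_mult_distrib field_simps)
  also have "\<dots> = (\<Prod>l\<in>I. x l ^ q l / fact (q l)) * ((\<Prod>l\<in>I. exp (- (x l * a))) * (\<Prod>l\<in>I. a ^ q l))"
    by (simp only: prod.distrib)
  also have "(\<Prod>l\<in>I. exp (- (x l * a))) = exp (- ((\<Sum>l\<in>I. x l) * a))"
    using assms by (simp add: sum_distrib_right sum_negf[symmetric] exp_sum)
  finally show ?thesis
    by (simp add: power_sum)
qed

lemma integral_mult_density_pos:
  fixes f g :: "real \<Rightarrow> real"
  assumes f: "f \<in> borel_measurable borel" "\<And>a. 0 < a \<Longrightarrow> 0 < f a" "\<And>a. 0 \<le> a \<Longrightarrow> f a \<le> C"
    and g: "integrable lborel g" "\<And>a. 0 \<le> g a" "\<And>a. a \<le> 0 \<Longrightarrow> g a = 0"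
      "integral\<^sup>L lborel g \<noteq> 0"
  shows "0 < (\<integral>a. f a * g a \<partial>lborel)"
proof -
  have nonneg: "0 \<le> f a * g a" for a
    using f(2)[of a] g(2,3)[of a] by (cases "0 < a") auto
  have bound: "norm (f a * g a) \<le> C * g a" for a
  proof (cases "0 < a")
    case True
    then show ?thesis
      using f(2,3)[of a] g(2)[of a] by (simp add: mult_right_mono)
  next
    case False
    then show ?thesis
      using g(3)[of a] by simp
  qed
  have "(\<lambda>a. f a * g a) \<in> borel_measurable lborel"
    using f(1) borel_measurable_integrable[OF g(1)] by simp
  moreover have "norm (f a * g a) \<le> norm (C * g a)" for a
    using bound[of a] by simp
  ultimately have int: "integrable lborel (\<lambda>a. f a * g a)"
    using Bochner_Integration.integrable_bound[OF integrable_mult_right[OF g(1), of C]] by blast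
  have "\<not> (AE a in lborel. f a * g a = 0)"
  proof
    assume "AE a in lborel. f a * g a = 0"
    then have "AE a in lborel. g a = 0"
    proof eventually_elim
      case (elim a)
      then show ?case
        using f(2)[of a] g(3)[of a] by (cases "0 < a") auto
    qed
    then have "integral\<^sup>L lborel g = 0"
      using integral_cong_AE[of g lborel "\<lambda>_. 0"] borel_measurable_integrable[OF g(1)] by simp
    with g(4) show False ..
  qed
  with int nonneg have "(\<integral>a. f a * g a \<partial>lborel) \<noteq> 0"
    by (simp add: integral_nonneg_eq_0_iff_AE)
  moreover have "0 \<le> (\<integral>a. f a * g a \<partial>lborel)"
    using nonneg by (simp add: integral_nonneg)
  ultimately show ?thesis
    by simp
qed

lemma two_point_split_increases_power_product:
  fixes p q a b :: real
  assumes p: "0 < p" and q: "0 < q" and a: "0 \<le> a" and b: "0 < b" and ne: "p * b \<noteq> q * a"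
  shows "\<exists>u v. 0 < u \<and> 0 < v \<and> u + v = p + q \<and> 1 < (u / p) powr a * (v / q) powr b"
proof (cases "a = 0")
  case True
  have "1 < (q + p / 2) / q"
    using p q by (simp add: field_simps)
  then have "1 < ((q + p / 2) / q) powr b"
    using b by simp
  then show ?thesis
    using p q True by (intro exI[of _ "p / 2"] exI[of _ "q + p / 2"]) auto
next
  case False
  with a have a: "0 < a" by simp
  \<comment> \<open>split \<open>p + q\<close> in the ratio \<open>a : b\<close>; Gibbs' inequality \<open>ln t < t - 1\<close> (\<open>t \<noteq> 1\<close>) gives the gain\<close>
  define u where "u = (p + q) * a / (a + b)"
  define v where "v = (p + q) * b / (a + b)"
  have u: "0 < u" and v: "0 < v"
    using p q a b by (simp_all add: u_def v_def)
  have uv: "u + v = p + q"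
    using a b by (simp add: u_def v_def add_divide_distrib[symmetric] distrib_left[symmetric])
  have "p \<noteq> u"
    using ne a b by (auto simp: u_def field_simps)
  then have "ln (p / u) < p / u - 1"
    using p u ln_le_minus_one[of "p / u"] ln_eq_minus_one[of "p / u"] by fastforce
  moreover have "ln (q / v) \<le> q / v - 1"
    using q v by (intro ln_le_minus_one) simp
  moreover have "a * (p / u - 1) + b * (q / v - 1) = 0"
  proof -
    have "a * (p / u) = (a + b) * p / (p + q)" "b * (q / v) = (a + b) * q / (p + q)"
      using p q a b by (simp_all add: u_def v_def)
    moreover have "(a + b) * p / (p + q) + (a + b) * q / (p + q) = a + b"
      using p q by (simp add: add_divide_distrib[symmetric] distrib_left[symmetric])
    ultimately show ?thesis
      by (simp add: right_diff_distrib)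
  qed
  ultimately have "a * ln (p / u) + b * ln (q / v) < 0"
    using a b mult_strict_left_mono[of "ln (p / u)" "p / u - 1" a]
      mult_left_mono[of "ln (q / v)" "q / v - 1" b] by linarith
  moreover have "ln ((u / p) powr a * (v / q) powr b) = - (a * ln (p / u) + b * ln (q / v))"
    using p q u v by (simp add: ln_mult ln_powr ln_div algebra_simps)
  ultimately have "0 < ln ((u / p) powr a * (v / q) powr b)"
    by simp
  then have "1 < (u / p) powr a * (v / q) powr b"
    using p q u v by (subst (asm) ln_gt_zero_iff) auto
  with u v uv show ?thesis by blast
qed

lemma multinomial_argmax_proportional:
  fixes x :: "'a \<Rightarrow> real" and c :: "'a \<Rightarrow> nat"
  assumes I: "finite I" "j \<in> I" "k \<in> I" and xpos: "\<forall>l\<in>I. 0 < x l" and ck: "0 < c k"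
    and max: "\<And>y. \<forall>l\<in>I. 0 < y l \<Longrightarrow> (\<Sum>l\<in>I. y l) = (\<Sum>l\<in>I. x l) \<Longrightarrow>
      (\<Prod>l\<in>I. y l ^ c l) \<le> (\<Prod>l\<in>I. x l ^ c l)"
  shows "x j * c k = x k * c j"
proof (rule ccontr)
  assume ne: "x j * c k \<noteq> x k * c j"
  then have jk: "j \<noteq> k" by auto
  have xj: "0 < x j" and xk: "0 < x k"
    using xpos I by auto
  obtain u v where u: "0 < u" and v: "0 < v" and uv: "u + v = x j + x k"
    and gain: "1 < (u / x j) ^ c j * (v / x k) ^ c k"
    using two_point_split_increases_power_product[of "x j" "x k" "c j" "c k"] xj xk ck ne
    by (auto simp: powr_realpow)
  define y where "y = x(j := u, k := v)"
  have yj: "y j = u" and yk: "y k = v" and y_rest: "\<And>l. l \<in> I - {j, k} \<Longrightarrow> y l = x l"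
    using jk by (simp_all add: y_def)
  have "\<forall>l\<in>I. 0 < y l"
    using xpos u v by (simp add: y_def)
  moreover have "(\<Sum>l\<in>I. y l) = (\<Sum>l\<in>I. x l)"
  proof -
    have "(\<Sum>l\<in>I - {j, k}. y l) = (\<Sum>l\<in>I - {j, k}. x l)"
      using y_rest by simp
    then show ?thesis
      using I jk uv sum.subset_diff[of "{j, k}" I y] sum.subset_diff[of "{j, k}" I x]
      by (simp add: yj yk)
  qed
  moreover have "(\<Prod>l\<in>I. y l ^ c l) = (u / x j) ^ c j * (v / x k) ^ c k * (\<Prod>l\<in>I. x l ^ c l)"
  proof -
    have "(\<Prod>l\<in>I. y l ^ c l) = (\<Prod>l\<in>I - {j, k}. y l ^ c l) * (\<Prod>l\<in>{j, k}. y l ^ c l)"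
      using I by (simp add: prod.subset_diff)
    also have "\<dots> = (\<Prod>l\<in>I - {j, k}. x l ^ c l) * (u ^ c j * v ^ c k)"
      using y_rest jk by (simp add: yj yk)
    also have "u ^ c j * v ^ c k = (u / x j) ^ c j * (v / x k) ^ c k * (x j ^ c j * x k ^ c k)"
      using xj xk by (simp add: power_divide)
    also have "x j ^ c j * x k ^ c k = (\<Prod>l\<in>{j, k}. x l ^ c l)"
      using jk by simp
    also have "(\<Prod>l\<in>I - {j, k}. x l ^ c l) * ((u / x j) ^ c j * (v / x k) ^ c k * \<dots>)
        = (u / x j) ^ c j * (v / x k) ^ c k * (\<Prod>l\<in>I. x l ^ c l)"
      using I by (simp add: prod.subset_diff[of "{j, k}" I])
    finally show ?thesis .
  qed
  ultimately have "(u / x j) ^ c j * (v / x k) ^ c k * (\<Prod>l\<in>I. x l ^ c l) \<le> (\<Prod>l\<in>I. x l ^ c l)"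
    using max by metis
  moreover have "0 < (\<Prod>l\<in>I. x l ^ c l)"
    using xpos by (simp add: prod_pos)
  ultimately show False
    using gain by simp
qed

definition RE_profile :: "nat \<Rightarrow> nat \<Rightarrow> (nat \<Rightarrow> nat \<Rightarrow> nat) \<Rightarrow> ('t \<Rightarrow> real \<Rightarrow> real)
    \<Rightarrow> 't \<Rightarrow> real \<Rightarrow> real" where
  "RE_profile m J n h \<theta> s =
     (\<Prod>i<m. (\<integral>a. exp (- (s * a)) * a ^ row_total J n i * h \<theta> a \<partial>lborel) / (\<Prod>l<J. fact (n i l)))"

lemma RE_lik_same_surface:
  assumes same: "\<forall>i<m. \<forall>j<J. S i j = Sj j"
  shows "RE_lik m J S n h lam \<theta>
    = (\<Prod>l<J. (lam l * Sj l) ^ col_total m n l) * RE_profile m J n h \<theta> (\<Sum>l<J. lam l * Sj l)"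
proof -
  define x where "x l = lam l * Sj l" for l
  define s where "s = (\<Sum>l<J. x l)"
  have shoe: "(\<integral>a. (\<Prod>l<J. exp (- (lam l * a * S i l)) * (lam l * a * S i l) ^ n i l / fact (n i l))
        * h \<theta> a \<partial>lborel)
      = (\<Prod>l<J. x l ^ n i l)
        * ((\<integral>a. exp (- (s * a)) * a ^ row_total J n i * h \<theta> a \<partial>lborel) / (\<Prod>l<J. fact (n i l)))"
    if i: "i < m" for i
  proof -
    have "(\<Prod>l<J. exp (- (lam l * a * S i l)) * (lam l * a * S i l) ^ n i l / fact (n i l))
        = (\<Prod>l<J. exp (- (x l * a)) * (x l * a) ^ n i l / fact (n i l))" for a
      using same i by (intro prod.cong refl) (simp add: x_def mult_ac)
    also have "\<dots> a = (\<Prod>l<J. x l ^ n i l) / (\<Prod>l<J. fact (n i l))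
        * (exp (- (s * a)) * a ^ row_total J n i)" for a
      by (subst prod_poisson_weights_factor) (simp_all add: prod_dividef s_def row_total_def)
    finally show ?thesis
      by (simp add: mult.assoc)
  qed
  have "RE_lik m J S n h lam \<theta> = (\<Prod>i<m. \<Prod>l<J. x l ^ n i l) * RE_profile m J n h \<theta> s"
    unfolding RE_lik_def RE_profile_def prod.distrib[symmetric] by (rule prod.cong) (simp_all add: shoe)
  also have "(\<Prod>i<m. \<Prod>l<J. x l ^ n i l) = (\<Prod>l<J. x l ^ col_total m n l)"
    by (simp add: prod.swap[of _ "{..<m}"] col_total_def power_sum)
  finally show ?thesis
    by (simp add: x_def s_def)
qed

lemma RE_profile_pos:
  assumes "mean_one_pos_density (h \<theta>)" "0 < s"
  shows "0 < RE_profile m J n h \<theta> s"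
  unfolding RE_profile_def
proof (intro prod_pos ballI divide_pos_pos)
  fix i
  show "0 < (\<integral>a. exp (- (s * a)) * a ^ row_total J n i * h \<theta> a \<partial>lborel)"
    using assms exp_neg_mult_power_le[OF \<open>0 < s\<close>]
    by (intro integral_mult_density_pos[where C = "fact (row_total J n i) / s ^ row_total J n i"])
      (auto simp: mean_one_pos_density_def)
qed (simp add: prod_pos)

lemma RE_est_ratio_same_surface:
  assumes dens: "\<forall>\<theta>\<in>\<Theta>. mean_one_pos_density (h \<theta>)"
    and same: "\<forall>i<m. \<forall>j<J. S i j = Sj j" and Spos: "\<forall>j<J. 0 < Sj j"
    and jk: "j < J" "k < J" "0 < col_total m n k"
    and est: "is_RE_est m J S n h \<Theta> lam \<theta>"
  shows "lam j / lam k = (real (col_total m n j) / real (col_total m n k)) * (Sj k / Sj j)"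
proof -
  have lpos: "\<forall>l<J. 0 < lam l" and \<theta>: "\<theta> \<in> \<Theta>"
    and max: "\<And>lam'. \<forall>l<J. 0 < lam' l \<Longrightarrow> RE_lik m J S n h lam' \<theta> \<le> RE_lik m J S n h lam \<theta>"
    using est unfolding is_RE_est_def by auto
  define x where "x l = lam l * Sj l" for l
  have xpos: "\<forall>l\<in>{..<J}. 0 < x l"
    using lpos Spos by (simp add: x_def)
  have profile_pos: "0 < RE_profile m J n h \<theta> (\<Sum>l<J. x l)"
    using dens \<theta> jk xpos by (intro RE_profile_pos sum_pos) auto
  have "x j * col_total m n k = x k * col_total m n j"
  proof (rule multinomial_argmax_proportional[of "{..<J}"])
    fix y
    assume ypos: "\<forall>l\<in>{..<J}. 0 < y l" and ysum: "(\<Sum>l<J. y l) = (\<Sum>l<J. x l)"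
    define lam' where "lam' l = y l / Sj l" for l
    have y: "lam' l * Sj l = y l" if "l < J" for l
      using Spos that by (simp add: lam'_def less_imp_neq[symmetric])
    have "(\<Prod>l<J. y l ^ col_total m n l) * RE_profile m J n h \<theta> (\<Sum>l<J. x l)
        = RE_lik m J S n h lam' \<theta>"
      using RE_lik_same_surface[OF same, of n h lam' \<theta>] y ysum by simp
    also have "\<dots> \<le> RE_lik m J S n h lam \<theta>"
      using ypos Spos by (intro max) (simp add: lam'_def)
    also have "\<dots> = (\<Prod>l<J. x l ^ col_total m n l) * RE_profile m J n h \<theta> (\<Sum>l<J. x l)"
      using RE_lik_same_surface[OF same] by (simp add: x_def)
    finally show "(\<Prod>l<J. y l ^ col_total m n l) \<le> (\<Prod>l<J. x l ^ col_total m n l)"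
      using profile_pos by simp
  qed (use jk xpos in auto)
  moreover have "0 < lam j" "0 < lam k" "0 < Sj j" "0 < Sj k"
    using lpos Spos jk by auto
  ultimately show ?thesis
    using jk(3) by (simp add: x_def field_simps)
qed

lemma naive_est_same_surface:
  assumes same: "\<forall>i<m. \<forall>j<J. S i j = Sj j" and Spos: "\<forall>j<J. 0 < Sj j" and l: "l < J"
  shows "naive_est m S n l = real (col_total m n l) / (real m * Sj l)"
proof -
  have "{i. i < m \<and> 0 < S i l} = {..<m}"
    using same Spos l by auto
  moreover have "(\<Sum>i<m. real (n i l) / S i l) = real (col_total m n l) / Sj l"
    using same l by (simp add: col_total_def sum_divide_distrib)
  ultimately show ?thesis
    by (simp add: naive_est_def)
qed

lemma naive_est_ratio_same_surface:
  assumes same: "\<forall>i<m. \<forall>j<J. S i j = Sj j" and Spos: "\<forall>j<J. 0 < Sj j"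
    and jk: "j < J" "k < J" "0 < col_total m n k"
  shows "naive_est m S n j / naive_est m S n k
    = (real (col_total m n j) / real (col_total m n k)) * (Sj k / Sj j)"
proof -
  have "0 < m"
    using jk(3) by (cases m) (auto simp: col_total_def)
  moreover have "0 < Sj j" "0 < Sj k"
    using Spos jk by auto
  ultimately show ?thesis
    using jk(3) by (simp add: naive_est_same_surface[OF same Spos] jk field_simps)
qed

lemma CML_est_ratio_same_surface:
  assumes same: "\<forall>i<m. \<forall>j<J. S i j = Sj j" and Spos: "\<forall>j<J. 0 < Sj j"
    and jk: "j < J" "k < J" "0 < col_total m n k"
    and est: "is_CML_est m J S n lam"
  shows "lam j / lam k = (real (col_total m n j) / real (col_total m n k)) * (Sj k / Sj j)"
proof -
  have lpos: "\<forall>l<J. 0 < lam l"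
    and score: "\<And>l. l < J \<Longrightarrow> (\<Sum>i<m. real (n i l) / lam l
      - real (row_total J n i) / (\<Sum>j'<J. S i j' * lam j') * S i l) = 0"
    using est unfolding is_CML_est_def by auto
  define D where "D = (\<Sum>j'<J. Sj j' * lam j')"
  define T where "T = (\<Sum>i<m. real (row_total J n i))"
  have col: "real (col_total m n l) = T / D * Sj l * lam l" if l: "l < J" for l
  proof -
    have "(\<Sum>i<m. real (n i l) / lam l - real (row_total J n i) / (\<Sum>j'<J. S i j' * lam j') * S i l)
        = real (col_total m n l) / lam l - T / D * Sj l"
      using same l
      by (simp add: D_def T_def col_total_def sum_subtractf sum_divide_distrib sum_distrib_right)
    moreover have "0 < lam l"
      using lpos l by simp
    ultimately show ?thesis
      using score[OF l] by (simp add: field_simps)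
  qed
  have "0 < D"
    unfolding D_def using jk lpos Spos by (intro sum_pos) auto
  moreover have "T \<noteq> 0"
    using col[OF jk(2)] jk(3) by auto
  moreover have "0 < lam j" "0 < lam k" "0 < Sj j" "0 < Sj k"
    using lpos Spos jk by auto
  ultimately show ?thesis
    unfolding col[OF jk(1)] col[OF jk(2)] by (simp add: field_simps)
qed

theorem proposition1:
  fixes m J :: nat
    and S :: "nat \<Rightarrow> nat \<Rightarrow> real" and Sj :: "nat \<Rightarrow> real"
    and n :: "nat \<Rightarrow> nat \<Rightarrow> nat"
    and h :: "'t \<Rightarrow> real \<Rightarrow> real" and \<Theta> :: "'t set"
  assumes dens: "\<forall>\<theta>\<in>\<Theta>. mean_one_pos_density (h \<theta>)"
    and same: "\<forall>i<m. \<forall>j<J. S i j = Sj j"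
    and Spos: "\<forall>j<J. Sj j > 0"
    and jk: "j < J" "k < J" "col_total m n k > 0"
  shows "naive_est m S n j / naive_est m S n k
           = (real (col_total m n j) / real (col_total m n k)) * (Sj k / Sj j)
       \<and> (\<forall>lam \<theta>. is_RE_est m J S n h \<Theta> lam \<theta> \<longrightarrow>
            lam j / lam k = (real (col_total m n j) / real (col_total m n k)) * (Sj k / Sj j))
       \<and> (\<forall>lam. is_CML_est m J S n lam \<longrightarrow>
            lam j / lam k = (real (col_total m n j) / real (col_total m n k)) * (Sj k / Sj j))"
  using naive_est_ratio_same_surface[OF same Spos jk] RE_est_ratio_same_surface[OF dens same Spos jk]
    CML_est_ratio_same_surface[OF same Spos jk]
  by blast

end
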